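(* Let $S$ be a (small) category. Then $S$ is a left gcd-category (resp., a right gcd-category, resp., a gcd-category) if and only if its universal monoid $\mathrm{U_{mon}}(S)$ is a left gcd-monoid (resp., a right gcd-monoid, resp., a gcd-monoid).
   Context: Categories are viewed "arrow-only": a category is a set $S$ with a partial associative multiplication in which every arrow $x$ has a source identity $\mathrm{s}(x)$ and a target identity $\mathrm{t}(x)$ with $x=\mathrm{s}(x)x=x\,\mathrm{t}(x)$, and $xy$ is defined iff $\mathrm{t}(x)=\mathrm{s}(y)$; $\mathrm{Id}\,S$ denotes the set of identities. The universal monoid $\mathrm{U_{mon}}(S)$ is the monoid presented by generators $\varepsilon_S(x)$, $x\in S$, and relations $\varepsilon_S(e)=1$ for $e\in\mathrm{Id}\,S$ and $\varepsilon_S(x)\varepsilon_S(y)=\varepsilon_S(xy)$ whenever $xy$ is defined; $\varepsilon_S:S\to\mathrm{U_{mon}}(S)$ is the canonical functor (it is initial among functors from $S$ to monoids). A category $S$ is conical if $xy\in\mathrm{Id}\,S$ implies $x\in\mathrm{Id}\,S$. Left divisibility: $a\leqslant b$ iff $b=ax$ for some $x\in S$; right divisibility: $a\mathbin{\widetilde\leqslant} b$ iff $b=xa$ for some $x$. A left gcd of a set is a greatest lower bound for $\leqslant$, a right gcd a greatest lower bound for $\mathbin{\widetilde\leqslant}$. $S$ is a left gcd-category if it is conical, left cancellative ($ax=ay\Rightarrow x=y$), and any $a,b\in S$ with $\mathrm{s}(a)=\mathrm{s}(b)$ have a left gcd; right gcd-categories are defined dually (right cancellative, any $a,b$ with $\mathrm{t}(a)=\mathrm{t}(b)$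 have a right gcd); a gcd-category is both. When $S$ is a monoid (a category with one identity $1$) these are called left gcd-monoid, right gcd-monoid, gcd-monoid. *)

theory Defs
  imports Main
begin

text \<open>Small categories, arrow-only: a carrier set of arrows, source and target
  maps (whose values are the identities), and a composition that is meaningful
  exactly when the target of the first arrow equals the source of the second.
  Composition is written left to right: comp x y is "xy".\<close>

record 'a cat =
  arr  :: "'a set"
  src  :: "'a \<Rightarrow> 'a"
  tgt  :: "'a \<Rightarrow> 'a"
  comp :: "'a \<Rightarrow> 'a \<Rightarrow> 'a"

definition defined :: "('a, 'b) cat_scheme \<Rightarrow> 'a \<Rightarrow> 'a \<Rightarrow> bool" where
  "defined C x y \<longleftrightarrow> x \<in> arr C \<and> y \<in> arr C \<and> tgt C x = src C y"

definition Ids :: "('a, 'b) cat_scheme \<Rightarrow> 'a set" where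
  "Ids C = {x \<in> arr C. src C x = x}"

definition category :: "('a, 'b) cat_scheme \<Rightarrow> bool" where
  "category C \<longleftrightarrow>
     (\<forall>x \<in> arr C. src C x \<in> arr C \<and> tgt C x \<in> arr C
        \<and> src C (src C x) = src C x \<and> tgt C (src C x) = src C x
        \<and> src C (tgt C x) = tgt C x \<and> tgt C (tgt C x) = tgt C x
        \<and> comp C (src C x) x = x \<and> comp C x (tgt C x) = x)
   \<and> (\<forall>x y. defined C x y \<longrightarrow> comp C x y \<in> arr C
        \<and> src C (comp C x y) = src C x \<and> tgt C (comp C x y) = tgt C y)
   \<and> (\<forall>x y z. defined C x y \<and> defined C y z \<longrightarrow>
        comp C (comp C x y) z = comp C x (comp C y z))"

inductive umon_rel :: "('a, 'b) cat_scheme \<Rightarrow> 'a list \<Rightarrow> 'a list \<Rightarrow> bool"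
  for C where
  refl: "u \<in> lists (arr C) \<Longrightarrow> umon_rel C u u"
| sym: "umon_rel C u v \<Longrightarrow> umon_rel C v u"
| trans: "umon_rel C u v \<Longrightarrow> umon_rel C v w \<Longrightarrow> umon_rel C u w"
| ctxt: "umon_rel C u v \<Longrightarrow> w1 \<in> lists (arr C) \<Longrightarrow> w2 \<in> lists (arr C) \<Longrightarrow>
         umon_rel C (w1 @ u @ w2) (w1 @ v @ w2)"
| ident: "e \<in> Ids C \<Longrightarrow> umon_rel C [e] []"
| compose: "defined C x y \<Longrightarrow> umon_rel C [x, y] [comp C x y]"

definition umon_class :: "('a, 'b) cat_scheme \<Rightarrow> 'a list \<Rightarrow> 'a list set" where
  "umon_class C u = {v. umon_rel C u v}"

definition umon_carrier :: "('a, 'b) cat_scheme \<Rightarrow> 'a list set set" where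
  "umon_carrier C = umon_class C ` lists (arr C)"

definition umon_one :: "('a, 'b) cat_scheme \<Rightarrow> 'a list set" where
  "umon_one C = umon_class C []"

definition umon_mult :: "('a, 'b) cat_scheme \<Rightarrow> 'a list set \<Rightarrow> 'a list set \<Rightarrow> 'a list set" where
  "umon_mult C X Y = umon_class C ((SOME u. u \<in> X) @ (SOME v. v \<in> Y))"

text \<open>The universal monoid U_mon(S), viewed as a one-object category
  (its only identity is the class of the empty word).\<close>

definition Umon :: "('a, 'b) cat_scheme \<Rightarrow> 'a list set cat" where
  "Umon C = \<lparr> arr = umon_carrier C, src = (\<lambda>_. umon_one C), tgt = (\<lambda>_. umon_one C),
              comp = umon_mult C \<rparr>"

definition ldiv :: "('a, 'b) cat_scheme \<Rightarrow> 'a \<Rightarrow> 'a \<Rightarrow> bool" where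
  "ldiv C a b \<longleftrightarrow> (\<exists>x. defined C a x \<and> b = comp C a x)"

definition rdiv :: "('a, 'b) cat_scheme \<Rightarrow> 'a \<Rightarrow> 'a \<Rightarrow> bool" where
  "rdiv C a b \<longleftrightarrow> (\<exists>x. defined C x a \<and> b = comp C x a)"

definition is_left_gcd :: "('a, 'b) cat_scheme \<Rightarrow> 'a \<Rightarrow> 'a \<Rightarrow> 'a \<Rightarrow> bool" where
  "is_left_gcd C a b c \<longleftrightarrow> ldiv C c a \<and> ldiv C c b \<and>
     (\<forall>d. ldiv C d a \<and> ldiv C d b \<longrightarrow> ldiv C d c)"

definition is_right_gcd :: "('a, 'b) cat_scheme \<Rightarrow> 'a \<Rightarrow> 'a \<Rightarrow> 'a \<Rightarrow> bool" where
  "is_right_gcd C a b c \<longleftrightarrow> rdiv C c a \<and> rdiv C c b \<and>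
     (\<forall>d. rdiv C d a \<and> rdiv C d b \<longrightarrow> rdiv C d c)"

definition conical :: "('a, 'b) cat_scheme \<Rightarrow> bool" where
  "conical C \<longleftrightarrow> (\<forall>x y. defined C x y \<and> comp C x y \<in> Ids C \<longrightarrow> x \<in> Ids C)"

definition left_cancellative :: "('a, 'b) cat_scheme \<Rightarrow> bool" where
  "left_cancellative C \<longleftrightarrow>
     (\<forall>a x y. defined C a x \<and> defined C a y \<and> comp C a x = comp C a y \<longrightarrow> x = y)"

definition right_cancellative :: "('a, 'b) cat_scheme \<Rightarrow> bool" where
  "right_cancellative C \<longleftrightarrow>
     (\<forall>a x y. defined C x a \<and> defined C y a \<and> comp C x a = comp C y a \<longrightarrow> x = y)"

definition left_gcd_cat :: "('a, 'b) cat_scheme \<Rightarrow> bool" where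
  "left_gcd_cat C \<longleftrightarrow> conical C \<and> left_cancellative C \<and>
     (\<forall>a \<in> arr C. \<forall>b \<in> arr C. src C a = src C b \<longrightarrow> (\<exists>c. is_left_gcd C a b c))"

definition right_gcd_cat :: "('a, 'b) cat_scheme \<Rightarrow> bool" where
  "right_gcd_cat C \<longleftrightarrow> conical C \<and> right_cancellative C \<and>
     (\<forall>a \<in> arr C. \<forall>b \<in> arr C. tgt C a = tgt C b \<longrightarrow> (\<exists>c. is_right_gcd C a b c))"

definition gcd_cat :: "('a, 'b) cat_scheme \<Rightarrow> bool" where
  "gcd_cat C \<longleftrightarrow> left_gcd_cat C \<and> right_gcd_cat C"

end

theory Submission
  imports Defs
begin

text \<open>Every word over the arrows of S reduces, by composing adjacent composable letters and
  deleting identities, to a unique normal word: a sequence of non-identity arrows no two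
  consecutive of which are composable. Hence U_mon(S) is isomorphic to the monoid of normal
  words under "concatenate and reduce".

  When S is conical, the left divisors of a normal word a p are the empty word, the one-letter
  words c with c a left divisor of a in S, and the words a d with d a nonempty left divisor of p.
  So left gcds of normal words are computed letter by letter from left gcds in S, while left gcds
  in S are recovered as left gcds of one-letter words; conicality and left cancellativity
  transfer in the same way. The right-handed statement is the left-handed one for the opposite
  category, because reversing words maps U_mon(S^op) isomorphically onto U_mon(S)^op.\<close>

lemma category_arrD:
  assumes "category S" "x \<in> arr S"
  shows "src S x \<in> arr S" "tgt S x \<in> arr S"
    "src S (src S x) = src S x" "tgt S (src S x) = src S x"
    "src S (tgt S x) = tgt S x" "tgt S (tgt S x) = tgt S x"
    "comp S (src S x) x = x" "comp S x (tgt S x) = x"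
  using assms unfolding category_def by simp_all

lemma category_compD:
  assumes "category S" "defined S x y"
  shows "comp S x y \<in> arr S" "src S (comp S x y) = src S x" "tgt S (comp S x y) = tgt S y"
  using assms unfolding category_def by simp_all

lemma category_assoc:
  "category S \<Longrightarrow> defined S x y \<Longrightarrow> defined S y z \<Longrightarrow>
     comp S (comp S x y) z = comp S x (comp S y z)"
  unfolding category_def by blast

lemma IdsD:
  assumes "category S" "e \<in> Ids S"
  shows "e \<in> arr S" "src S e = e" "tgt S e = e"
  using assms category_arrD(4)[of S e] unfolding Ids_def by auto

lemma src_in_Ids: "category S \<Longrightarrow> x \<in> arr S \<Longrightarrow> src S x \<in> Ids S"
  unfolding Ids_def using category_arrD(1,3)[of S x] by simp

lemma tgt_in_Ids: "category S \<Longrightarrow> x \<in> arr S \<Longrightarrow> tgt S x \<in> Ids S"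
  unfolding Ids_def using category_arrD(2,5)[of S x] by simp

lemma comp_Ids_left: "category S \<Longrightarrow> e \<in> Ids S \<Longrightarrow> defined S e y \<Longrightarrow> comp S e y = y"
  unfolding defined_def using IdsD(3) category_arrD(7) by metis

lemma comp_Ids_right: "category S \<Longrightarrow> e \<in> Ids S \<Longrightarrow> defined S x e \<Longrightarrow> comp S x e = x"
  unfolding defined_def using IdsD(2) category_arrD(8) by metis

lemma ldiv_refl: "category S \<Longrightarrow> a \<in> arr S \<Longrightarrow> ldiv S a a"
  unfolding ldiv_def defined_def using category_arrD(2,5,8) by metis

lemma src_ldiv: "category S \<Longrightarrow> a \<in> arr S \<Longrightarrow> ldiv S (src S a) a"
  unfolding ldiv_def defined_def using category_arrD(1,4,7) by metis

lemma ldiv_arr: "ldiv S c a \<Longrightarrow> c \<in> arr S"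
  unfolding ldiv_def defined_def by auto

lemma ldiv_src_eq: "category S \<Longrightarrow> ldiv S c a \<Longrightarrow> src S a = src S c"
  unfolding ldiv_def using category_compD(2) by metis

lemma ldiv_trans:
  assumes "category S" "ldiv S a b" "ldiv S b c"
  shows "ldiv S a c"
proof -
  obtain x where x: "defined S a x" "b = comp S a x" using assms(2) unfolding ldiv_def by blast
  obtain y where y: "defined S b y" "c = comp S b y" using assms(3) unfolding ldiv_def by blast
  have "defined S x y" using x y category_compD(3)[OF assms(1) x(1)]
    unfolding defined_def by auto
  moreover have "defined S a (comp S x y)"
    using x calculation category_compD[OF assms(1)] unfolding defined_def by auto
  ultimately show ?thesis using x y category_assoc[OF assms(1)] unfolding ldiv_def by metis
qed

lemma ldiv_Ids:
  assumes "category S" "conical S" "e \<in> Ids S" "ldiv S d e"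
  shows "d = e"
proof -
  have "d \<in> Ids S" using assms(2-4) unfolding ldiv_def conical_def by blast
  then show ?thesis using ldiv_src_eq[OF assms(1,4)] IdsD[OF assms(1)] assms(3) by metis
qed

lemma comp_eq_self_imp_Ids:
  assumes "category S" "left_cancellative S" "defined S a b" "comp S a b = a"
  shows "b \<in> Ids S"
proof -
  have a: "a \<in> arr S" using assms(3) unfolding defined_def by simp
  have "defined S a (tgt S a)" "comp S a (tgt S a) = a"
    using category_arrD[OF assms(1) a] a unfolding defined_def by auto
  then have "b = tgt S a" using assms(2-4) unfolding left_cancellative_def by metis
  then show ?thesis using tgt_in_Ids[OF assms(1) a] by simp
qed

definition cat_iso :: "('a \<Rightarrow> 'b) \<Rightarrow> ('a, 'c) cat_scheme \<Rightarrow> ('b, 'd) cat_scheme \<Rightarrow> bool" where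
  "cat_iso h C D \<longleftrightarrow> bij_betw h (arr C) (arr D)
     \<and> (\<forall>x\<in>arr C. h (src C x) = src D (h x) \<and> h (tgt C x) = tgt D (h x))
     \<and> (\<forall>x y. defined C x y \<longrightarrow> h (comp C x y) = comp D (h x) (h y))"

locale iso_categories =
  fixes h :: "'a \<Rightarrow> 'b" and C :: "('a, 'c) cat_scheme" and D :: "('b, 'd) cat_scheme"
  assumes C: "category C" and D: "category D" and iso: "cat_iso h C D"
begin

lemma bij: "bij_betw h (arr C) (arr D)"
  using iso unfolding cat_iso_def by simp

lemma arr_image: "x \<in> arr C \<Longrightarrow> h x \<in> arr D"
  using bij bij_betwE by blast

lemma inj_eq: "x \<in> arr C \<Longrightarrow> y \<in> arr C \<Longrightarrow> h x = h y \<longleftrightarrow> x = y"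
  using bij unfolding bij_betw_def inj_on_def by blast

lemma arr_preimageE:
  assumes "y \<in> arr D"
  obtains x where "x \<in> arr C" "y = h x"
  using bij assms unfolding bij_betw_def by blast

lemma src_image: "x \<in> arr C \<Longrightarrow> src D (h x) = h (src C x)"
  using iso unfolding cat_iso_def by simp

lemma tgt_image: "x \<in> arr C \<Longrightarrow> tgt D (h x) = h (tgt C x)"
  using iso unfolding cat_iso_def by simp

lemma comp_image: "defined C x y \<Longrightarrow> comp D (h x) (h y) = h (comp C x y)"
  using iso unfolding cat_iso_def by simp

lemma Ids_image: "x \<in> arr C \<Longrightarrow> h x \<in> Ids D \<longleftrightarrow> x \<in> Ids C"
  unfolding Ids_def using arr_image src_image inj_eq category_arrD(1)[OF C] by auto

lemma defined_image: "x \<in> arr C \<Longrightarrow> y \<in> arr C \<Longrightarrow> defined D (h x) (h y) \<longleftrightarrow> defined C x y"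
  unfolding defined_def using arr_image src_image tgt_image inj_eq category_arrD(1,2)[OF C] by auto

lemma defined_preimageE:
  assumes "defined D x' y'"
  obtains x y where "defined C x y" "x' = h x" "y' = h y"
proof -
  have "x' \<in> arr D" "y' \<in> arr D" using assms unfolding defined_def by auto
  then obtain x y where "x \<in> arr C" "y \<in> arr C" "x' = h x" "y' = h y"
    by (elim arr_preimageE)
  then show ?thesis using that assms defined_image by blast
qed

lemma ldiv_image:
  assumes x: "x \<in> arr C" and y: "y \<in> arr C"
  shows "ldiv D (h x) (h y) \<longleftrightarrow> ldiv C x y"
proof
  assume "ldiv D (h x) (h y)"
  then obtain z' where z': "defined D (h x) z'" "h y = comp D (h x) z'"
    unfolding ldiv_def by blast
  then obtain z where z: "z \<in> arr C" "z' = h z"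
    using arr_preimageE unfolding defined_def by blast
  then have "defined C x z" using z' defined_image x by simp
  moreover have "y = comp C x z"
    using z' z comp_image inj_eq[OF y] calculation category_compD(1)[OF C] by metis
  ultimately show "ldiv C x y" unfolding ldiv_def by blast
next
  assume "ldiv C x y"
  then obtain z where "defined C x z" "y = comp C x z" unfolding ldiv_def by blast
  then show "ldiv D (h x) (h y)"
    using comp_image defined_image x unfolding ldiv_def defined_def by metis
qed

lemma inverse: "iso_categories (inv_into (arr C) h) D C"
proof -
  let ?g = "inv_into (arr C) h"
  have g: "?g (h x) = x" if "x \<in> arr C" for x
    using bij that by (simp add: bij_betw_def)
  have "?g (src D y) = src C (?g y) \<and> ?g (tgt D y) = tgt C (?g y)" if "y \<in> arr D" for y
    using that by (elim arr_preimageE) (simp add: src_image tgt_image g category_arrD(1,2)[OF C])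
  moreover have "?g (comp D x y) = comp C (?g x) (?g y)" if "defined D x y" for x y
    using that
  proof (rule defined_preimageE)
    fix x0 y0 assume "defined C x0 y0" "x = h x0" "y = h y0"
    then show ?thesis
      using comp_image g category_compD(1)[OF C] unfolding defined_def by auto
  qed
  ultimately show ?thesis
    unfolding iso_categories_def cat_iso_def using C D bij_betw_inv_into[OF bij] by blast
qed

lemma conical_image:
  assumes "conical C"
  shows "conical D"
  unfolding conical_def
proof (intro allI impI)
  fix x' y' assume xy': "defined D x' y' \<and> comp D x' y' \<in> Ids D"
  then obtain x y where xy: "defined C x y" "x' = h x" "y' = h y"
    by (blast elim: defined_preimageE)
  then have "comp C x y \<in> Ids C"
    using xy' comp_image Ids_image category_compD(1)[OF C] by metis
  then show "x' \<in> Ids D"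
    using assms xy Ids_image unfolding conical_def defined_def by blast
qed

lemma left_cancellative_image:
  assumes "left_cancellative C"
  shows "left_cancellative D"
  unfolding left_cancellative_def
proof (intro allI impI)
  fix a' x' y' assume H: "defined D a' x' \<and> defined D a' y' \<and> comp D a' x' = comp D a' y'"
  then obtain a x where ax: "defined C a x" "a' = h a" "x' = h x"
    by (blast elim: defined_preimageE)
  obtain y where y: "y \<in> arr C" "y' = h y"
    using H arr_preimageE unfolding defined_def by blast
  have ay: "defined C a y" using H ax y defined_image unfolding defined_def by auto
  have "comp C a x = comp C a y"
    using H ax y comp_image[OF ax(1)] comp_image[OF ay] inj_eq category_compD(1)[OF C ax(1)]
      category_compD(1)[OF C ay] by metis
  then show "x' = y'" using assms ax ay y unfolding left_cancellative_def by blast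
qed

lemma is_left_gcd_image:
  assumes "a \<in> arr C" "b \<in> arr C" "c \<in> arr C" "is_left_gcd C a b c"
  shows "is_left_gcd D (h a) (h b) (h c)"
  unfolding is_left_gcd_def
proof (intro conjI allI impI)
  show "ldiv D (h c) (h a)" "ldiv D (h c) (h b)"
    using assms ldiv_image unfolding is_left_gcd_def by auto
  fix d' assume d': "ldiv D d' (h a) \<and> ldiv D d' (h b)"
  then have "d' \<in> arr D" using ldiv_arr[of D d'] by blast
  then obtain d where "d \<in> arr C" "d' = h d" by (rule arr_preimageE)
  then show "ldiv D d' (h c)"
    using d' assms ldiv_image unfolding is_left_gcd_def by auto
qed

lemma left_gcd_cat_image:
  assumes "left_gcd_cat C"
  shows "left_gcd_cat D"
proof -
  have "\<exists>c'. is_left_gcd D (h a) (h b) c'"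
    if ab: "a \<in> arr C" "b \<in> arr C" "src D (h a) = src D (h b)" for a b
  proof -
    have "src C a = src C b"
      using ab src_image inj_eq category_arrD(1)[OF C] by metis
    then obtain c where "is_left_gcd C a b c"
      using assms ab unfolding left_gcd_cat_def by blast
    moreover have "c \<in> arr C" using calculation ldiv_arr[of C c] unfolding is_left_gcd_def by blast
    ultimately show ?thesis using is_left_gcd_image ab(1,2) by blast
  qed
  then show ?thesis
    using assms conical_image left_cancellative_image arr_preimageE
    unfolding left_gcd_cat_def by (metis (no_types))
qed

lemma left_gcd_cat_iff: "left_gcd_cat D \<longleftrightarrow> left_gcd_cat C"
  using left_gcd_cat_image iso_categories.left_gcd_cat_image[OF inverse] by blast

end

section \<open>Normal words\<close>

fun normal :: "('a, 'b) cat_scheme \<Rightarrow> 'a list \<Rightarrow> bool" where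
  "normal C [] = True"
| "normal C [a] = (a \<in> arr C \<and> a \<notin> Ids C)"
| "normal C (a # b # r) = (a \<in> arr C \<and> a \<notin> Ids C \<and> tgt C a \<noteq> src C b \<and> normal C (b # r))"

text \<open>For normal w, push C a w is the normal form of the word a w: the letter a is composed
  into the first letter while they are composable, and dropped once it is an identity.\<close>

fun push :: "('a, 'b) cat_scheme \<Rightarrow> 'a \<Rightarrow> 'a list \<Rightarrow> 'a list" where
  "push C a [] = (if a \<in> Ids C then [] else [a])"
| "push C a (b # r) =
     (if tgt C a = src C b then push C (comp C a b) r
      else if a \<in> Ids C then b # r else a # b # r)"

definition nf :: "('a, 'b) cat_scheme \<Rightarrow> 'a list \<Rightarrow> 'a list" where
  "nf C u = foldr (push C) u []"

definition nmult :: "('a, 'b) cat_scheme \<Rightarrow> 'a list \<Rightarrow> 'a list \<Rightarrow> 'a list" where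
  "nmult C p q = foldr (push C) p q"

lemma nmult_Nil [simp]: "nmult C [] q = q"
  by (simp add: nmult_def)

lemma nmult_Cons: "nmult C (a # p) q = push C a (nmult C p q)"
  by (simp add: nmult_def)

lemma normal_Cons:
  "normal C (a # w) \<longleftrightarrow>
     a \<in> arr C \<and> a \<notin> Ids C \<and> (w \<noteq> [] \<longrightarrow> tgt C a \<noteq> src C (hd w)) \<and> normal C w"
  by (cases w) auto

lemma normal_lists: "normal C w \<Longrightarrow> w \<in> lists (arr C)"
  by (induction w) (auto simp: normal_Cons)

lemma push_normal:
  assumes S: "category S"
  shows "a \<in> arr S \<Longrightarrow> normal S w \<Longrightarrow> normal S (push S a w)"
proof (induction w arbitrary: a)
  case (Cons b r)
  show ?case
  proof (cases "tgt S a = src S b")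
    case True
    then have "defined S a b" using Cons.prems by (simp add: defined_def normal_Cons)
    then show ?thesis
      using Cons.IH[of "comp S a b"] Cons.prems True category_compD(1)[OF S] by (simp add: normal_Cons)
  qed (use Cons.prems in \<open>auto simp: normal_Cons\<close>)
qed simp

lemma push_normal_self: "normal C (a # w) \<Longrightarrow> push C a w = a # w"
  by (cases w) auto

lemma push_Ids: "category S \<Longrightarrow> e \<in> Ids S \<Longrightarrow> normal S w \<Longrightarrow> push S e w = w"
proof (cases w)
  case (Cons b r)
  assume S: "category S" and e: "e \<in> Ids S" and w: "normal S w"
  have b: "b \<in> arr S" using w Cons by (simp add: normal_Cons)
  show ?thesis
  proof (cases "tgt S e = src S b")
    case True
    then have "comp S e b = b" using comp_Ids_left[OF S e] b IdsD[OF S e] by (simp add: defined_def)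
    then show ?thesis using True push_normal_self w Cons by simp
  qed (use e Cons in simp)
qed simp

lemma push_push:
  assumes S: "category S"
  shows "defined S a b \<Longrightarrow> w \<in> lists (arr S) \<Longrightarrow> push S a (push S b w) = push S (comp S a b) w"
proof (induction w arbitrary: b)
  case Nil
  then show ?case using comp_Ids_right[OF S] by (auto simp: defined_def)
next
  case (Cons x r)
  show ?case
  proof (cases "tgt S b = src S x")
    case True
    then have bx: "defined S b x" using Cons.prems by (auto simp: defined_def)
    have "defined S a (comp S b x)"
      using Cons.prems(1) category_compD[OF S bx] by (auto simp: defined_def)
    then have "push S a (push S b (x # r)) = push S (comp S a (comp S b x)) r"
      using Cons True by simp
    also have "comp S a (comp S b x) = comp S (comp S a b) x"
      using category_assoc[OF S Cons.prems(1) bx] by simp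
    finally show ?thesis using True category_compD(3)[OF S Cons.prems(1)] by simp
  next
    case False
    have "tgt S a = src S b" using Cons.prems(1) by (simp add: defined_def)
    moreover have "b \<in> Ids S \<Longrightarrow> comp S a b = a" using comp_Ids_right[OF S _ Cons.prems(1)] .
    ultimately show ?thesis using False category_compD(3)[OF S Cons.prems(1)] by auto
  qed
qed

lemma foldr_push_normal:
  "category S \<Longrightarrow> u \<in> lists (arr S) \<Longrightarrow> normal S w \<Longrightarrow> normal S (foldr (push S) u w)"
  by (induction u) (auto intro: push_normal)

lemma nf_normal: "category S \<Longrightarrow> u \<in> lists (arr S) \<Longrightarrow> normal S (nf S u)"
  unfolding nf_def by (simp add: foldr_push_normal)

lemma nf_normal_id: "normal S w \<Longrightarrow> nf S w = w"
  by (induction w) (auto simp: nf_def normal_Cons push_normal_self)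

lemma nmult_normal: "category S \<Longrightarrow> normal S p \<Longrightarrow> normal S q \<Longrightarrow> normal S (nmult S p q)"
  unfolding nmult_def by (simp add: foldr_push_normal normal_lists)

lemma foldr_push_push:
  assumes S: "category S" and w: "normal S w"
  shows "a \<in> arr S \<Longrightarrow> u \<in> lists (arr S) \<Longrightarrow>
    foldr (push S) (push S a u) w = push S a (foldr (push S) u w)"
proof (induction u arbitrary: a)
  case Nil
  then show ?case using push_Ids[OF S _ w] by simp
next
  case (Cons b r)
  show ?case
  proof (cases "tgt S a = src S b")
    case True
    then have ab: "defined S a b" using Cons.prems by (simp add: defined_def)
    then have "foldr (push S) (push S (comp S a b) r) w = push S (comp S a b) (foldr (push S) r w)"
      using Cons category_compD(1)[OF S] by simp
    moreover have "foldr (push S) r w \<in> lists (arr S)"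
      using normal_lists[OF foldr_push_normal[OF S _ w]] Cons.prems(2) by simp
    ultimately show ?thesis using True push_push[OF S ab] by simp
  next
    case False
    then show ?thesis
      using push_Ids[OF S _ foldr_push_normal[OF S Cons.prems(2) w]] by simp
  qed
qed

lemma foldr_push_nf:
  assumes S: "category S" and w: "normal S w"
  shows "u \<in> lists (arr S) \<Longrightarrow> foldr (push S) u w = foldr (push S) (nf S u) w"
proof (induction u)
  case (Cons a u)
  then have "foldr (push S) (a # u) w = push S a (foldr (push S) (nf S u) w)" by simp
  also have "\<dots> = foldr (push S) (nf S (a # u)) w"
    using foldr_push_push[OF S w, of a "nf S u"] Cons.prems normal_lists[OF nf_normal[OF S]]
    by (simp add: nf_def)
  finally show ?case .
qed (simp add: nf_def)

lemma nf_append: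
  "category S \<Longrightarrow> u \<in> lists (arr S) \<Longrightarrow> v \<in> lists (arr S) \<Longrightarrow>
     nf S (u @ v) = nmult S (nf S u) (nf S v)"
  unfolding nmult_def using foldr_push_nf nf_normal by (metis foldr_append nf_def)

lemma nmult_assoc:
  assumes S: "category S" and "normal S p" "normal S q" "normal S r"
  shows "nmult S (nmult S p q) r = nmult S p (nmult S q r)"
proof -
  have "nmult S p q = nf S (p @ q)"
    using nf_append[OF S] normal_lists nf_normal_id assms(2,3) by metis
  moreover have "p @ q \<in> lists (arr S)" using normal_lists assms(2,3) by auto
  ultimately have "nmult S (nmult S p q) r = foldr (push S) (p @ q) r"
    using foldr_push_nf[OF S assms(4), of "p @ q"] by (simp add: nmult_def)
  then show ?thesis by (simp add: nmult_def)
qed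

section \<open>The universal monoid as the monoid of normal words\<close>

lemma umon_rel_lists:
  assumes S: "category S"
  shows "umon_rel S u v \<Longrightarrow> u \<in> lists (arr S) \<and> v \<in> lists (arr S)"
proof (induction rule: umon_rel.induct)
  case (ident e)
  then show ?case using IdsD(1)[OF S] by simp
next
  case (compose x y)
  then show ?case using category_compD(1)[OF S compose] by (simp add: defined_def)
qed auto

lemma umon_rel_Cons_push:
  assumes S: "category S"
  shows "a \<in> arr S \<Longrightarrow> w \<in> lists (arr S) \<Longrightarrow> umon_rel S (a # w) (push S a w)"
proof (induction w arbitrary: a)
  case Nil
  then show ?case by (auto intro: umon_rel.ident umon_rel.refl)
next
  case (Cons b r)
  show ?case
  proof (cases "tgt S a = src S b")
    case True
    then have ab: "defined S a b" using Cons.prems by (simp add: defined_def)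
    have "umon_rel S ([] @ [a, b] @ r) ([] @ [comp S a b] @ r)"
      by (rule umon_rel.ctxt[OF umon_rel.compose[OF ab]]) (use Cons.prems in auto)
    moreover have "umon_rel S (comp S a b # r) (push S (comp S a b) r)"
      using Cons category_compD(1)[OF S ab] by simp
    ultimately show ?thesis using True umon_rel.trans by fastforce
  next
    case False
    show ?thesis
    proof (cases "a \<in> Ids S")
      case True
      have "umon_rel S ([] @ [a] @ (b # r)) ([] @ [] @ (b # r))"
        by (rule umon_rel.ctxt[OF umon_rel.ident[OF True]]) (use Cons.prems in auto)
      then show ?thesis using False True by simp
    qed (use False Cons.prems in \<open>simp add: umon_rel.refl\<close>)
  qed
qed

lemma umon_rel_nf:
  assumes S: "category S"
  shows "u \<in> lists (arr S) \<Longrightarrow> umon_rel S u (nf S u)"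
proof (induction u)
  case (Cons a u)
  have "umon_rel S ([a] @ u @ []) ([a] @ nf S u @ [])"
    by (rule umon_rel.ctxt) (use Cons in auto)
  moreover have "umon_rel S (a # nf S u) (push S a (nf S u))"
    using umon_rel_Cons_push[OF S] normal_lists[OF nf_normal[OF S]] Cons.prems by simp
  ultimately show ?case using umon_rel.trans by (fastforce simp: nf_def)
qed (simp add: nf_def umon_rel.refl)

lemma umon_rel_imp_nf_eq:
  assumes S: "category S"
  shows "umon_rel S u v \<Longrightarrow> nf S u = nf S v"
proof (induction rule: umon_rel.induct)
  case (ctxt u v w1 w2)
  have uv: "u \<in> lists (arr S)" "v \<in> lists (arr S)" using umon_rel_lists[OF S ctxt.hyps(1)] by auto
  have w2: "normal S (nf S w2)" using nf_normal[OF S ctxt.hyps(3)] .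
  have "foldr (push S) u (nf S w2) = foldr (push S) v (nf S w2)"
    using foldr_push_nf[OF S w2] uv ctxt.IH by metis
  then show ?case by (simp add: nf_def)
next
  case (compose x y)
  then show ?case using push_push[OF S compose, of "[]"] by (simp add: nf_def del: push.simps)
qed (auto simp: nf_def)

lemma umon_rel_iff_nf_eq:
  assumes S: "category S" and "u \<in> lists (arr S)" "v \<in> lists (arr S)"
  shows "umon_rel S u v \<longleftrightarrow> nf S u = nf S v"
proof
  assume "nf S u = nf S v"
  then show "umon_rel S u v"
    using umon_rel_nf[OF S] assms(2,3) umon_rel.sym umon_rel.trans by metis
qed (rule umon_rel_imp_nf_eq[OF S])

lemma umon_class_eq: "umon_rel C u v \<Longrightarrow> umon_class C u = umon_class C v"
  unfolding umon_class_def using umon_rel.sym umon_rel.trans by blast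

lemma umon_class_eq_iff:
  assumes S: "category S" and u: "u \<in> lists (arr S)" and v: "v \<in> lists (arr S)"
  shows "umon_class S u = umon_class S v \<longleftrightarrow> nf S u = nf S v"
proof
  assume "umon_class S u = umon_class S v"
  then have "umon_rel S u v" using umon_rel.refl[OF v] unfolding umon_class_def by blast
  then show "nf S u = nf S v" using umon_rel_imp_nf_eq[OF S] by blast
qed (use umon_class_eq umon_rel_iff_nf_eq[OF S u v] in blast)

lemma umon_rel_append:
  assumes S: "category S" and "umon_rel S u u'" "umon_rel S v v'"
  shows "umon_rel S (u @ v) (u' @ v')"
proof -
  have "umon_rel S ([] @ u @ v) ([] @ u' @ v)" "umon_rel S (u' @ v @ []) (u' @ v' @ [])"
    using assms umon_rel_lists[OF S] by (blast intro: umon_rel.ctxt)+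
  then show ?thesis using umon_rel.trans by simp
qed

lemma umon_mult_class:
  assumes S: "category S" and u: "u \<in> lists (arr S)" and v: "v \<in> lists (arr S)"
  shows "umon_mult S (umon_class S u) (umon_class S v) = umon_class S (u @ v)"
proof -
  have "u \<in> umon_class S u" "v \<in> umon_class S v"
    using u v by (simp_all add: umon_class_def umon_rel.refl)
  then have "umon_rel S u (SOME u'. u' \<in> umon_class S u)" "umon_rel S v (SOME v'. v' \<in> umon_class S v)"
    by (metis mem_Collect_eq someI umon_class_def)+
  then show ?thesis
    unfolding umon_mult_def using umon_class_eq umon_rel_append[OF S] by metis
qed

lemma umon_carrierE:
  assumes "X \<in> umon_carrier C"
  obtains u where "u \<in> lists (arr C)" "X = umon_class C u"
  using assms that unfolding umon_carrier_def by blast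

lemma umon_class_in_carrier: "u \<in> lists (arr C) \<Longrightarrow> umon_class C u \<in> umon_carrier C"
  unfolding umon_carrier_def by auto

lemma category_Umon:
  assumes S: "category S"
  shows "category (Umon S)"
proof -
  have "umon_mult S X Y \<in> umon_carrier S" if "X \<in> umon_carrier S" "Y \<in> umon_carrier S" for X Y
    using that umon_mult_class[OF S] umon_class_in_carrier
    by (metis append_in_lists_conv umon_carrierE)
  moreover have "umon_mult S (umon_one S) X = X" "umon_mult S X (umon_one S) = X"
    if "X \<in> umon_carrier S" for X
    using that umon_mult_class[OF S, of "[]"] umon_mult_class[OF S _ lists.Nil]
    unfolding umon_one_def by (metis append.left_neutral append.right_neutral lists.Nil umon_carrierE)+
  moreover have "umon_mult S (umon_mult S X Y) Z = umon_mult S X (umon_mult S Y Z)"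
    if "X \<in> umon_carrier S" "Y \<in> umon_carrier S" "Z \<in> umon_carrier S" for X Y Z
    using that by (elim umon_carrierE) (simp add: umon_mult_class[OF S])
  moreover have "umon_one S \<in> umon_carrier S"
    unfolding umon_one_def by (rule umon_class_in_carrier) simp
  ultimately show ?thesis unfolding category_def defined_def Umon_def by simp
qed

definition Nmon :: "('a, 'b) cat_scheme \<Rightarrow> 'a list cat" where
  "Nmon S = \<lparr>arr = {w. normal S w}, src = (\<lambda>_. []), tgt = (\<lambda>_. []), comp = nmult S\<rparr>"

lemma Nmon_simps [simp]:
  "arr (Nmon S) = {w. normal S w}" "src (Nmon S) p = []" "tgt (Nmon S) p = []"
  "comp (Nmon S) p q = nmult S p q"
  by (simp_all add: Nmon_def)

lemma defined_Nmon [simp]: "defined (Nmon S) p q \<longleftrightarrow> normal S p \<and> normal S q"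
  by (simp add: defined_def)

lemma Ids_Nmon [simp]: "Ids (Nmon S) = {[]}"
  by (auto simp: Ids_def)

lemma nmult_Nil_right: "normal S p \<Longrightarrow> nmult S p [] = p"
  by (simp add: nmult_def nf_normal_id flip: nf_def)

lemma category_Nmon: "category S \<Longrightarrow> category (Nmon S)"
  unfolding category_def[of "Nmon S"]
  by (simp add: nmult_normal nmult_assoc nmult_Nil_right)

lemma cat_iso_Nmon_Umon:
  assumes S: "category S"
  shows "cat_iso (umon_class S) (Nmon S) (Umon S)"
proof -
  have "inj_on (umon_class S) {w. normal S w}"
    using umon_class_eq_iff[OF S] normal_lists nf_normal_id by (metis inj_onI mem_Collect_eq)
  moreover have "umon_class S ` {w. normal S w} = umon_carrier S"
  proof
    show "umon_carrier S \<subseteq> umon_class S ` {w. normal S w}"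
    proof
      fix X assume "X \<in> umon_carrier S"
      then obtain u where u: "u \<in> lists (arr S)" "X = umon_class S u" by (rule umon_carrierE)
      then have "X = umon_class S (nf S u)"
        using umon_class_eq[OF umon_rel_nf[OF S u(1)]] by simp
      then show "X \<in> umon_class S ` {w. normal S w}" using nf_normal[OF S u(1)] by simp
    qed
  qed (auto simp: normal_lists umon_class_in_carrier)
  moreover have "umon_class S (nmult S p q) = umon_mult S (umon_class S p) (umon_class S q)"
    if "normal S p" "normal S q" for p q
  proof -
    have "nmult S p q = nf S (p @ q)"
      using that nf_append[OF S] normal_lists nf_normal_id by metis
    then show ?thesis
      using that umon_class_eq[OF umon_rel_nf[OF S]] umon_mult_class[OF S] normal_lists
      by (metis append_in_lists_conv)
  qed
  ultimately show ?thesis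
    unfolding cat_iso_def bij_betw_def by (simp add: Umon_def umon_one_def)
qed

section \<open>Opposite categories\<close>

definition op :: "('a, 'b) cat_scheme \<Rightarrow> 'a cat" where
  "op C = \<lparr>arr = arr C, src = tgt C, tgt = src C, comp = (\<lambda>x y. comp C y x)\<rparr>"

lemma op_simps [simp]:
  "arr (op C) = arr C" "src (op C) = tgt C" "tgt (op C) = src C" "comp (op C) x y = comp C y x"
  by (simp_all add: op_def)

lemma op_op [simp]: "op (op S) = (S :: 'a cat)"
  by (simp add: op_def)

lemma defined_op [simp]: "defined (op C) x y \<longleftrightarrow> defined C y x"
  unfolding defined_def by auto

lemma Ids_op [simp]: "category C \<Longrightarrow> Ids (op C) = Ids C"
  unfolding Ids_def using category_arrD(4,5) by fastforce

lemma category_op: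
  assumes C: "category C"
  shows "category (op C)"
  unfolding category_def[of "op C"] using category_arrD[OF C] category_compD[OF C]
  by (auto simp: category_assoc[OF C])

lemma conical_op:
  assumes C: "category C"
  shows "conical (op C) \<longleftrightarrow> conical C"
proof -
  have "y \<in> Ids C \<longleftrightarrow> x \<in> Ids C" if "defined C x y" "comp C x y \<in> Ids C" for x y
    using that comp_Ids_left[OF C] comp_Ids_right[OF C] by metis
  then show ?thesis unfolding conical_def using C by auto
qed

lemma left_cancellative_op: "left_cancellative (op C) \<longleftrightarrow> right_cancellative C"
  unfolding left_cancellative_def right_cancellative_def by simp

lemma is_left_gcd_op: "is_left_gcd (op C) = is_right_gcd C"
  unfolding is_left_gcd_def is_right_gcd_def ldiv_def rdiv_def by simp

lemma left_gcd_cat_op: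
  assumes "category C"
  shows "left_gcd_cat (op C) \<longleftrightarrow> right_gcd_cat C"
  unfolding left_gcd_cat_def right_gcd_cat_def
  by (simp add: conical_op[OF assms] left_cancellative_op is_left_gcd_op)

lemma umon_rel_op_rev:
  assumes S: "category S"
  shows "umon_rel (op S) u v \<Longrightarrow> umon_rel S (rev u) (rev v)"
proof (induction rule: umon_rel.induct)
  case (ctxt u v w1 w2)
  have "umon_rel S (rev w2 @ rev u @ rev w1) (rev w2 @ rev v @ rev w1)"
    using ctxt by (intro umon_rel.ctxt) (simp_all add: in_lists_conv_set)
  then show ?case by simp
next
  case (compose x y)
  then show ?case using umon_rel.compose[of S y x] by simp
qed (use S in \<open>auto intro: umon_rel.intros simp: in_lists_conv_set\<close>)

lemma image_rev_umon_class_op: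
  fixes S :: "'a cat"
  assumes S: "category S"
  shows "rev ` umon_class (op S) u = umon_class S (rev u)"
proof -
  have "umon_rel (op S) u v \<longleftrightarrow> umon_rel S (rev u) (rev v)" for v
    using umon_rel_op_rev[OF S] umon_rel_op_rev[OF category_op[OF S], of "rev u" "rev v"] by auto
  then show ?thesis
    unfolding umon_class_def by (auto intro: image_eqI[where x = "rev w" for w])
qed

lemma image_rev_lists [simp]: "rev ` lists A = lists A"
  by (auto simp: in_lists_conv_set intro: image_eqI[where x = "rev w" for w])

lemma cat_iso_Umon_op:
  fixes S :: "'a cat"
  assumes S: "category S"
  shows "cat_iso (image rev) (Umon (op S)) (op (Umon S))"
proof -
  have "image rev ` umon_carrier (op S) = (umon_class S \<circ> rev) ` lists (arr S)"
    by (simp add: umon_carrier_def image_image image_rev_umon_class_op[OF S] comp_def)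
  also have "\<dots> = umon_carrier S"
    by (simp only: image_comp[symmetric] image_rev_lists umon_carrier_def)
  finally have carrier: "image rev ` umon_carrier (op S) = umon_carrier S" .
  have mult: "rev ` umon_mult (op S) X Y = umon_mult S (rev ` Y) (rev ` X)"
    if "X \<in> umon_carrier (op S)" "Y \<in> umon_carrier (op S)" for X Y
    using that
  proof (elim umon_carrierE)
    fix u v assume "u \<in> lists (arr (op S))" "v \<in> lists (arr (op S))"
      "X = umon_class (op S) u" "Y = umon_class (op S) v"
    then show ?thesis
      using umon_mult_class[OF category_op[OF S]] umon_mult_class[OF S]
      by (simp add: image_rev_umon_class_op[OF S] in_lists_conv_set)
  qed
  have "inj_on (image rev) (umon_carrier (op S))"
    by (rule inj_onI) (simp add: inj_image_eq_iff)
  then show ?thesis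
    unfolding cat_iso_def bij_betw_def
    using carrier mult image_rev_umon_class_op[OF S, of "[]"]
    by (simp add: Umon_def umon_one_def defined_def)
qed

section \<open>Left gcds of normal words\<close>

lemma ldiv_Nmon: "ldiv (Nmon S) d p \<longleftrightarrow> normal S d \<and> (\<exists>r. normal S r \<and> p = nmult S d r)"
  unfolding ldiv_def by auto

lemma nf_single: "nf S [x] = (if x \<in> Ids S then [] else [x])"
  by (simp add: nf_def)

lemma nf_single_eq_iff:
  assumes "src S x = src S y"
  shows "nf S [x] = nf S [y] \<longleftrightarrow> x = y"
proof
  assume "nf S [x] = nf S [y]"
  then have "x = y \<or> x \<in> Ids S \<and> y \<in> Ids S" by (auto simp: nf_single split: if_splits)
  then show "x = y" using assms unfolding Ids_def by auto
qed simp

lemma push_merge: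
  assumes S: "category S" and "conical S" "a \<notin> Ids S" "defined S a b" "normal S (b # r)"
  shows "push S a (b # r) = comp S a b # r"
proof -
  have "comp S a b \<notin> Ids S" using assms(2-4) unfolding conical_def by blast
  then have "normal S (comp S a b # r)"
    using assms(5) category_compD[OF S assms(4)] by (simp add: normal_Cons)
  then show ?thesis using assms(4) push_normal_self by (simp add: defined_def)
qed

lemma push_cases:
  assumes S: "category S" and "conical S" "a \<in> arr S" "a \<notin> Ids S" "normal S w"
  obtains "push S a w = a # w"
    | b r where "w = b # r" "defined S a b" "push S a w = comp S a b # r"
proof (cases w)
  case (Cons b r)
  show ?thesis
  proof (cases "tgt S a = src S b")
    case True
    then have "defined S a b" using assms Cons by (simp add: defined_def normal_Cons)
    then show ?thesis using that(2) push_merge[OF S assms(2,4)] assms(5) Cons by blast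
  qed (use that(1) assms(4) Cons in simp)
qed (use that(1) assms(4) in simp)

lemma push_hd:
  assumes S: "category S" and "conical S" "a \<in> arr S" "a \<notin> Ids S" "normal S w"
  shows "push S a w \<noteq> [] \<and> src S (hd (push S a w)) = src S a"
  using assms category_compD(2)[OF S] by (cases rule: push_cases) auto

lemma nmult_hd:
  assumes S: "category S" and "conical S" "normal S p" "p \<noteq> []" "normal S q"
  shows "nmult S p q \<noteq> [] \<and> src S (hd (nmult S p q)) = src S (hd p)"
proof (cases p)
  case (Cons a d)
  then show ?thesis
    using assms push_hd[OF S] nmult_normal[OF S] by (simp add: nmult_Cons normal_Cons)
qed (use assms in simp)

lemma nmult_Cons_nonsingleton:
  assumes S: "category S" and "conical S" "normal S (a # d)" "d \<noteq> []" "normal S r"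
  shows "nmult S (a # d) r = a # nmult S d r"
proof -
  have "normal S (a # nmult S d r)"
    using assms nmult_hd[OF S] nmult_normal[OF S] by (simp add: normal_Cons)
  then show ?thesis by (simp add: nmult_Cons push_normal_self)
qed

lemma ldiv_Nmon_push:
  assumes S: "category S" and "a \<in> arr S" "ldiv (Nmon S) d p"
  shows "ldiv (Nmon S) (push S a d) (push S a p)"
proof -
  obtain r where r: "normal S d" "normal S r" "p = nmult S d r"
    using assms(3) unfolding ldiv_Nmon by blast
  then have "push S a p = nmult S (push S a d) r"
    using foldr_push_push[OF S r(2) assms(2) normal_lists[OF r(1)]] by (simp add: nmult_def)
  then show ?thesis using r push_normal[OF S assms(2)] unfolding ldiv_Nmon by blast
qed

lemma ldiv_Nmon_Nil_left: "normal S p \<Longrightarrow> ldiv (Nmon S) [] p"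
  unfolding ldiv_Nmon by auto

lemma ldiv_Nmon_Nil_right:
  assumes S: "category S" and "conical S"
  shows "ldiv (Nmon S) d [] \<longleftrightarrow> d = []"
  using nmult_hd[OF S assms(2)] unfolding ldiv_Nmon by fastforce

lemma single_ldiv_Nmon_Cons:
  assumes S: "category S" and ap: "normal S (a # p)"
  shows "ldiv (Nmon S) [a] (a # p)"
proof -
  have "a \<in> arr S" "normal S p" using ap by (auto simp: normal_Cons)
  then have "ldiv (Nmon S) (push S a []) (push S a p)"
    using ldiv_Nmon_push[OF S] ldiv_Nmon_Nil_left by blast
  then show ?thesis using push_normal_self[OF ap] ap by (simp add: normal_Cons)
qed

lemma ldiv_Nmon_ConsE:
  assumes S: "category S" and cS: "conical S" and d: "ldiv (Nmon S) d (a # p)"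
  obtains "d = []"
    | c where "d = [c]" "c \<notin> Ids S" "ldiv S c a"
    | d' where "d = a # d'" "d' \<noteq> []" "ldiv (Nmon S) d' p"
proof -
  obtain r where d: "normal S d" and r: "normal S r" "a # p = nmult S d r"
    using assms(3) unfolding ldiv_Nmon by blast
  show ?thesis
  proof (cases d)
    case (Cons c d')
    have c: "c \<in> arr S" "c \<notin> Ids S" "normal S d'" using d Cons by (auto simp: normal_Cons)
    show ?thesis
    proof (cases "d' = []")
      case True
      then have "push S c r = a # p" using r Cons by (simp add: nmult_Cons)
      then have "ldiv S c a"
      proof (cases rule: push_cases[OF S cS c(1,2) r(1)])
        case 1
        then show ?thesis using \<open>push S c r = a # p\<close> ldiv_refl[OF S c(1)] by simp
      next
        case (2 b r')
        then show ?thesis using \<open>push S c r = a # p\<close> unfolding ldiv_def by auto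
      qed
      then show ?thesis using that(2) Cons True c by simp
    next
      case False
      then have "a = c" "p = nmult S d' r"
        using r nmult_Cons_nonsingleton[OF S cS] d Cons by simp_all
      then show ?thesis using that(3) Cons False c(3) r(1) unfolding ldiv_Nmon by blast
    qed
  qed (use that(1) in simp)
qed

lemma single_ldiv_Nmon_ConsI:
  assumes S: "category S" and cS: "conical S" and ap: "normal S (a # p)"
    and c: "c \<notin> Ids S" "ldiv S c a"
  shows "ldiv (Nmon S) [c] (a # p)"
proof -
  obtain x where x: "defined S c x" "a = comp S c x" using c(2) unfolding ldiv_def by blast
  show ?thesis
  proof (cases "x \<in> Ids S")
    case True
    then show ?thesis using x comp_Ids_right[OF S] single_ldiv_Nmon_Cons[OF S ap] by metis
  next
    case False
    then have "normal S (x # p)"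
      using x ap category_compD(3)[OF S x(1)] by (simp add: normal_Cons defined_def)
    moreover have "nmult S [c] (x # p) = a # p"
      using push_merge[OF S cS c(1) x(1) calculation] x(2) by (simp add: nmult_Cons)
    moreover have "normal S [c]" using c ldiv_arr by simp
    ultimately show ?thesis unfolding ldiv_Nmon by metis
  qed
qed

lemma Cons_ldiv_Nmon_ConsI:
  assumes S: "category S" and cS: "conical S" and ap: "normal S (a # p)"
    and d: "d \<noteq> []" "ldiv (Nmon S) d p"
  shows "ldiv (Nmon S) (a # d) (a # p)"
proof -
  obtain r where r: "normal S d" "normal S r" "p = nmult S d r"
    using d(2) unfolding ldiv_Nmon by blast
  have "normal S (a # d)"
    using ap r d(1) nmult_hd[OF S cS] by (simp add: normal_Cons)
  then show ?thesis
    using ldiv_Nmon_push[OF S _ d(2)] push_normal_self ap by (metis normal_Cons)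
qed

lemma ldiv_Nmon_Cons:
  assumes S: "category S" and cS: "conical S" and ap: "normal S (a # p)"
  shows "ldiv (Nmon S) d (a # p) \<longleftrightarrow>
    d = [] \<or> (\<exists>c. d = [c] \<and> c \<notin> Ids S \<and> ldiv S c a) \<or>
    (\<exists>d'. d = a # d' \<and> d' \<noteq> [] \<and> ldiv (Nmon S) d' p)"
  using ldiv_Nmon_ConsE[OF S cS, of d a p] ldiv_Nmon_Nil_left[OF ap]
    single_ldiv_Nmon_ConsI[OF S cS ap] Cons_ldiv_Nmon_ConsI[OF S cS ap]
  by blast

lemma nmult_nf_single:
  assumes S: "category S" and "defined S x y"
  shows "nmult S (nf S [x]) (nf S [y]) = nf S [comp S x y]"
proof -
  have "[x] \<in> lists (arr S)" "[y] \<in> lists (arr S)" using assms(2) by (simp_all add: defined_def)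
  then show ?thesis
    using nf_append[OF S] umon_rel_imp_nf_eq[OF S umon_rel.compose[OF assms(2)]] by fastforce
qed

lemma conical_Nmon:
  assumes S: "category S"
  shows "conical (Nmon S) \<longleftrightarrow> conical S"
proof
  assume cN: "conical (Nmon S)"
  show "conical S" unfolding conical_def
  proof (intro allI impI)
    fix x y assume xy: "defined S x y \<and> comp S x y \<in> Ids S"
    then have "nmult S (nf S [x]) (nf S [y]) = []"
      using nmult_nf_single[OF S] by (simp add: nf_single)
    moreover have "normal S (nf S [x])" "normal S (nf S [y])"
      using xy nf_normal[OF S] by (simp_all add: defined_def)
    ultimately have "nf S [x] = []" using cN unfolding conical_def by simp blast
    then show "x \<in> Ids S" by (simp add: nf_single split: if_splits)
  qed
next
  assume "conical S"
  then show "conical (Nmon S)"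
    using nmult_hd[OF S] unfolding conical_def by auto
qed

lemma push_inj:
  assumes S: "category S" and cS: "conical S" and lc: "left_cancellative S"
    and a: "a \<in> arr S" "a \<notin> Ids S" and w: "normal S w" "normal S w'"
    and eq: "push S a w = push S a w'"
  shows "w = w'"
proof -
  have no_fix: "push S a v \<noteq> a # u" if "normal S v" "push S a v \<noteq> a # v" for u v
  proof (cases rule: push_cases[OF S cS a that(1)])
    case (2 b r)
    then have "b \<notin> Ids S" using that(1) by (simp add: normal_Cons)
    then show ?thesis using 2 comp_eq_self_imp_Ids[OF S lc] by auto
  qed (use that in simp)
  show ?thesis
  proof (cases rule: push_cases[OF S cS a w(1)])
    case 1
    then show ?thesis using eq no_fix[OF w(2)] by fastforce
  next
    case (2 b r)
    show ?thesis
    proof (cases rule: push_cases[OF S cS a w(2)])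
      case 1
      then show ?thesis using eq no_fix[OF w(1)] by fastforce
    next
      case (2 b' r')
      then show ?thesis
        using \<open>w = b # r\<close> \<open>defined S a b\<close> \<open>push S a w = comp S a b # r\<close> eq lc
        unfolding left_cancellative_def by auto
    qed
  qed
qed

lemma nmult_inj:
  assumes S: "category S" and cS: "conical S" and lc: "left_cancellative S"
  shows "normal S p \<Longrightarrow> normal S q \<Longrightarrow> normal S q' \<Longrightarrow> nmult S p q = nmult S p q' \<Longrightarrow> q = q'"
proof (induction p arbitrary: q q')
  case (Cons a d)
  have a: "a \<in> arr S" "a \<notin> Ids S" "normal S d" using Cons.prems(1) by (auto simp: normal_Cons)
  show ?case
  proof (cases "d = []")
    case True
    then show ?thesis
      using push_inj[OF S cS lc a(1,2) Cons.prems(2,3)] Cons.prems(4) by (simp add: nmult_Cons)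
  next
    case False
    then show ?thesis
      using Cons nmult_Cons_nonsingleton[OF S cS Cons.prems(1) False] a(3) by simp
  qed
qed simp

lemma left_cancellative_Nmon:
  assumes S: "category S" and cS: "conical S"
  shows "left_cancellative (Nmon S) \<longleftrightarrow> left_cancellative S"
proof
  assume lN: "left_cancellative (Nmon S)"
  show "left_cancellative S" unfolding left_cancellative_def
  proof (intro allI impI)
    fix a x y assume axy: "defined S a x \<and> defined S a y \<and> comp S a x = comp S a y"
    then have "nmult S (nf S [a]) (nf S [x]) = nmult S (nf S [a]) (nf S [y])"
      using nmult_nf_single[OF S] by simp
    moreover have "normal S (nf S [z])" if "z \<in> arr S" for z
      using nf_normal[OF S] that by simp
    ultimately have "nf S [x] = nf S [y]"
      using lN axy unfolding left_cancellative_def defined_def by simp blast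
    then show "x = y" using axy nf_single_eq_iff unfolding defined_def by metis
  qed
next
  assume "left_cancellative S"
  then show "left_cancellative (Nmon S)"
    using nmult_inj[OF S cS] unfolding left_cancellative_def[of "Nmon S"] by auto
qed

lemma ldiv_Nmon_nf_single:
  assumes S: "category S" and cS: "conical S" and a: "a \<in> arr S"
  shows "ldiv (Nmon S) d (nf S [a]) \<longleftrightarrow> (\<exists>c. ldiv S c a \<and> d = nf S [c])"
proof (cases "a \<in> Ids S")
  case True
  then have "ldiv S c a \<longleftrightarrow> c = a" for c using ldiv_Ids[OF S cS True] ldiv_refl[OF S a] by blast
  then show ?thesis using True ldiv_Nmon_Nil_right[OF S cS] by (simp add: nf_single)
next
  case False
  then have "normal S [a]" using a by simp
  then have "ldiv (Nmon S) d [a] \<longleftrightarrow> d = [] \<or> (\<exists>c. d = [c] \<and> c \<notin> Ids S \<and> ldiv S c a)"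
    using ldiv_Nmon_Cons[OF S cS, of a "[]" d] ldiv_Nmon_Nil_right[OF S cS] by auto
  also have "\<dots> \<longleftrightarrow> (\<exists>c. ldiv S c a \<and> d = nf S [c])"
    using src_ldiv[OF S a] src_in_Ids[OF S a] by (auto simp: nf_single)
  finally show ?thesis using False by (simp add: nf_single)
qed

lemma nf_single_ldiv_Nmon_iff:
  assumes S: "category S" and cS: "conical S" and "a \<in> arr S" "src S c = src S a"
  shows "ldiv (Nmon S) (nf S [c]) (nf S [a]) \<longleftrightarrow> ldiv S c a"
  using ldiv_Nmon_nf_single[OF S cS assms(3)] nf_single_eq_iff ldiv_src_eq[OF S] assms(4)
  by metis

lemma ex_left_gcd_of_Nmon:
  assumes S: "category S" and cS: "conical S" and ab: "a \<in> arr S" "b \<in> arr S" "src S a = src S b"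
    and g: "is_left_gcd (Nmon S) (nf S [a]) (nf S [b]) g"
  shows "\<exists>c. is_left_gcd S a b c"
proof -
  obtain c where c: "ldiv S c a" "g = nf S [c]"
    using g ldiv_Nmon_nf_single[OF S cS ab(1)] unfolding is_left_gcd_def by blast
  have src_c: "src S c = src S a" using ldiv_src_eq[OF S c(1)] by simp
  have "is_left_gcd S a b c"
    unfolding is_left_gcd_def
  proof (intro conjI allI impI)
    show "ldiv S c a" by (fact c(1))
    show "ldiv S c b"
      using g c nf_single_ldiv_Nmon_iff[OF S cS ab(2)] src_c ab(3) unfolding is_left_gcd_def by simp
    fix d assume d: "ldiv S d a \<and> ldiv S d b"
    then have "src S d = src S a" using ldiv_src_eq[OF S, of d a] by simp
    then have "ldiv (Nmon S) (nf S [d]) g"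
      using g d nf_single_ldiv_Nmon_iff[OF S cS] ab unfolding is_left_gcd_def by simp
    then show "ldiv S d c"
      using c nf_single_ldiv_Nmon_iff[OF S cS ldiv_arr[OF c(1)]] src_c \<open>src S d = src S a\<close> by simp
  qed
  then show ?thesis by blast
qed

lemma is_left_gcd_Nmon_Nil:
  assumes S: "category S" and cS: "conical S" and q: "normal S q"
  shows "is_left_gcd (Nmon S) [] q []" "is_left_gcd (Nmon S) q [] []"
  using ldiv_Nmon_Nil_left[of S] ldiv_Nmon_Nil_right[OF S cS] q unfolding is_left_gcd_def by auto

lemma is_left_gcd_Nmon_Cons_same:
  assumes S: "category S" and cS: "conical S" and ap: "normal S (a # p)" and aq: "normal S (a # q)"
    and g: "is_left_gcd (Nmon S) p q g"
  shows "is_left_gcd (Nmon S) (a # p) (a # q) (push S a g)"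
  unfolding is_left_gcd_def
proof (intro conjI allI impI)
  have a: "a \<in> arr S" "a \<notin> Ids S" using ap by (auto simp: normal_Cons)
  show "ldiv (Nmon S) (push S a g) (a # p)" "ldiv (Nmon S) (push S a g) (a # q)"
    using ldiv_Nmon_push[OF S a(1)] g push_normal_self ap aq unfolding is_left_gcd_def by metis+
  have g_normal: "normal S g" using g unfolding is_left_gcd_def ldiv_Nmon by blast
  then have "ldiv (Nmon S) (push S a []) (push S a g)"
    using ldiv_Nmon_push[OF S a(1) ldiv_Nmon_Nil_left] by blast
  then have a_g: "ldiv (Nmon S) [a] (push S a g)" using a(2) by simp
  fix d assume d: "ldiv (Nmon S) d (a # p) \<and> ldiv (Nmon S) d (a # q)"
  then consider "d = []" | c where "d = [c]" "c \<notin> Ids S" "ldiv S c a"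
    | d' where "d = a # d'" "d' \<noteq> []" "ldiv (Nmon S) d' p" "ldiv (Nmon S) d' q"
    using ldiv_Nmon_Cons[OF S cS ap, of d] ldiv_Nmon_Cons[OF S cS aq, of d] by auto
  then show "ldiv (Nmon S) d (push S a g)"
  proof cases
    case 1
    then show ?thesis using ldiv_Nmon_Nil_left push_normal[OF S a(1) g_normal] by simp
  next
    case 2
    have "normal S [a]" using a by simp
    then have "ldiv (Nmon S) d [a]" using 2 ldiv_Nmon_Cons[OF S cS] by blast
    then show ?thesis using a_g ldiv_trans[OF category_Nmon[OF S]] by blast
  next
    case 3
    then have "ldiv (Nmon S) (push S a d') (push S a g)"
      using g ldiv_Nmon_push[OF S a(1)] unfolding is_left_gcd_def by blast
    moreover have "normal S (a # d')" using d 3(1) unfolding ldiv_Nmon by simp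
    ultimately show ?thesis using 3(1) push_normal_self by metis
  qed
qed

lemma common_ldiv_Nmon_Cons_distinct:
  assumes S: "category S" and cS: "conical S" and "normal S (a # p)" "normal S (b # q)" "a \<noteq> b"
    and "ldiv (Nmon S) d (a # p)" "ldiv (Nmon S) d (b # q)"
  shows "d = [] \<or> (\<exists>c. d = [c] \<and> c \<notin> Ids S \<and> ldiv S c a \<and> ldiv S c b)"
  using ldiv_Nmon_Cons[OF S cS assms(3), of d] ldiv_Nmon_Cons[OF S cS assms(4), of d] assms(5-7)
  by auto

lemma is_left_gcd_Nmon_Cons_distinct:
  assumes S: "category S" and cS: "conical S" and ap: "normal S (a # p)" and bq: "normal S (b # q)"
    and "a \<noteq> b" "src S a = src S b" and c: "is_left_gcd S a b c"
  shows "is_left_gcd (Nmon S) (a # p) (b # q) (nf S [c])"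
  unfolding is_left_gcd_def
proof (intro conjI allI impI)
  have "ldiv S c a" using c unfolding is_left_gcd_def by blast
  then have c_arr: "c \<in> arr S" and src_c: "src S c = src S a"
    using ldiv_arr ldiv_src_eq[OF S] by auto
  have c_ldiv_Cons: "ldiv (Nmon S) (nf S [c]) (x # r)" if xr: "normal S (x # r)" "ldiv S c x" for x r
  proof -
    have x: "x \<in> arr S" "x \<notin> Ids S" using xr(1) by (auto simp: normal_Cons)
    have "ldiv (Nmon S) (nf S [c]) [x]"
      using nf_single_ldiv_Nmon_iff[OF S cS x(1)] xr(2) ldiv_src_eq[OF S] x(2)
      by (metis nf_single)
    then show ?thesis using single_ldiv_Nmon_Cons[OF S xr(1)] ldiv_trans[OF category_Nmon[OF S]] by blast
  qed
  show "ldiv (Nmon S) (nf S [c]) (a # p)" "ldiv (Nmon S) (nf S [c]) (b # q)"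
    using c_ldiv_Cons ap bq c unfolding is_left_gcd_def by auto
  fix d assume "ldiv (Nmon S) d (a # p) \<and> ldiv (Nmon S) d (b # q)"
  then consider "d = []" | c' where "d = [c']" "c' \<notin> Ids S" "ldiv S c' a" "ldiv S c' b"
    using common_ldiv_Nmon_Cons_distinct[OF S cS ap bq \<open>a \<noteq> b\<close>] by blast
  then show "ldiv (Nmon S) d (nf S [c])"
  proof cases
    case 1
    then show ?thesis using ldiv_Nmon_Nil_left[of S "nf S [c]"] nf_normal[OF S, of "[c]"] c_arr by simp
  next
    case 2
    then have "ldiv S c' c" using c unfolding is_left_gcd_def by blast
    then show ?thesis
      using 2 nf_single_ldiv_Nmon_iff[OF S cS c_arr] ldiv_src_eq[OF S] src_c
      by (metis nf_single)
  qed
qed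

lemma is_left_gcd_Nmon_Cons_src_distinct:
  assumes S: "category S" and cS: "conical S" and ap: "normal S (a # p)" and bq: "normal S (b # q)"
    and src_ab: "src S a \<noteq> src S b"
  shows "is_left_gcd (Nmon S) (a # p) (b # q) []"
  unfolding is_left_gcd_def
proof (intro conjI allI impI)
  show "ldiv (Nmon S) [] (a # p)" "ldiv (Nmon S) [] (b # q)"
    using ap bq ldiv_Nmon_Nil_left by blast+
  fix d assume "ldiv (Nmon S) d (a # p) \<and> ldiv (Nmon S) d (b # q)"
  then have "d = []"
    using common_ldiv_Nmon_Cons_distinct[OF S cS ap bq] src_ab ldiv_src_eq[OF S] by metis
  then show "ldiv (Nmon S) d []" using ldiv_Nmon_Nil_left[of S "[]"] by simp
qed

lemma ex_left_gcd_Nmon: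
  assumes S: "category S" and G: "left_gcd_cat S"
  shows "normal S p \<Longrightarrow> normal S q \<Longrightarrow> \<exists>g. is_left_gcd (Nmon S) p q g"
proof (induction p arbitrary: q)
  case Nil
  then show ?case using is_left_gcd_Nmon_Nil[OF S] G unfolding left_gcd_cat_def by blast
next
  case (Cons a p)
  have cS: "conical S" using G unfolding left_gcd_cat_def by blast
  show ?case
  proof (cases q)
    case Nil
    then show ?thesis using is_left_gcd_Nmon_Nil[OF S cS Cons.prems(1)] by blast
  next
    case (Cons b q')
    have ap: "normal S (a # p)" and bq: "normal S (b # q')" using Cons Cons.prems by simp_all
    consider "a = b" | "a \<noteq> b" "src S a = src S b" | "src S a \<noteq> src S b" by blast
    then show ?thesis
    proof cases
      case 1
      obtain g where "is_left_gcd (Nmon S) p q' g"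
        using Cons.IH ap bq by (auto simp: normal_Cons)
      then show ?thesis using is_left_gcd_Nmon_Cons_same[OF S cS ap] bq 1 Cons by blast
    next
      case 2
      obtain c where "is_left_gcd S a b c"
        using G 2 ap bq unfolding left_gcd_cat_def by (auto simp: normal_Cons)
      then show ?thesis using is_left_gcd_Nmon_Cons_distinct[OF S cS ap bq 2] Cons by blast
    next
      case 3
      then show ?thesis using is_left_gcd_Nmon_Cons_src_distinct[OF S cS ap bq] Cons by blast
    qed
  qed
qed

lemma left_gcd_cat_Nmon_iff:
  assumes S: "category S"
  shows "left_gcd_cat (Nmon S) \<longleftrightarrow> left_gcd_cat S"
proof
  assume N: "left_gcd_cat (Nmon S)"
  then have cS: "conical S" using conical_Nmon[OF S] unfolding left_gcd_cat_def by blast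
  have "\<exists>c. is_left_gcd S a b c" if "a \<in> arr S" "b \<in> arr S" "src S a = src S b" for a b
  proof -
    have "\<exists>g. is_left_gcd (Nmon S) (nf S [a]) (nf S [b]) g"
      using N nf_normal[OF S, of "[a]"] nf_normal[OF S, of "[b]"] that
      unfolding left_gcd_cat_def by simp
    then show ?thesis using ex_left_gcd_of_Nmon[OF S cS that] by blast
  qed
  then show "left_gcd_cat S"
    using N cS conical_Nmon[OF S] left_cancellative_Nmon[OF S cS] unfolding left_gcd_cat_def by blast
next
  assume G: "left_gcd_cat S"
  then have cS: "conical S" unfolding left_gcd_cat_def by blast
  then show "left_gcd_cat (Nmon S)"
    using G conical_Nmon[OF S] left_cancellative_Nmon[OF S cS] ex_left_gcd_Nmon[OF S G]
    unfolding left_gcd_cat_def by simp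
qed

lemma left_gcd_cat_Umon_iff:
  assumes S: "category S"
  shows "left_gcd_cat (Umon S) \<longleftrightarrow> left_gcd_cat S"
proof -
  interpret iso_categories "umon_class S" "Nmon S" "Umon S"
    by (rule iso_categories.intro[OF category_Nmon[OF S] category_Umon[OF S] cat_iso_Nmon_Umon[OF S]])
  show ?thesis using left_gcd_cat_iff left_gcd_cat_Nmon_iff[OF S] by simp
qed

lemma right_gcd_cat_Umon_iff:
  fixes S :: "'a cat"
  assumes S: "category S"
  shows "right_gcd_cat (Umon S) \<longleftrightarrow> right_gcd_cat S"
proof -
  have S_op: "category (op S)" by (rule category_op[OF S])
  interpret iso_categories "image rev" "Umon (op S)" "op (Umon S)"
    by (rule iso_categories.intro[OF category_Umon[OF S_op] category_op[OF category_Umon[OF S]]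
          cat_iso_Umon_op[OF S]])
  have "right_gcd_cat (Umon S) \<longleftrightarrow> left_gcd_cat (op (Umon S))"
    using left_gcd_cat_op[OF category_Umon[OF S]] by simp
  also have "\<dots> \<longleftrightarrow> left_gcd_cat (Umon (op S))" by (rule left_gcd_cat_iff)
  also have "\<dots> \<longleftrightarrow> left_gcd_cat (op S)" by (rule left_gcd_cat_Umon_iff[OF S_op])
  also have "\<dots> \<longleftrightarrow> right_gcd_cat S" by (rule left_gcd_cat_op[OF S])
  finally show ?thesis .
qed

theorem theorem5p9:
  fixes S :: "'a cat"
  assumes "category S"
  shows "(left_gcd_cat S \<longleftrightarrow> left_gcd_cat (Umon S))
       \<and> (right_gcd_cat S \<longleftrightarrow> right_gcd_cat (Umon S))
       \<and> (gcd_cat S \<longleftrightarrow> gcd_cat (Umon S))"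
  using left_gcd_cat_Umon_iff[OF assms] right_gcd_cat_Umon_iff[OF assms]
  unfolding gcd_cat_def by simp

end
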